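(* Let $\mathcal{X}$ be a state space and let $C:\mathcal{X}\to U$ be the ground-truth meta-state mapping of a Meta-Causal Graph $\{\mathcal{G}_u\}_{u\in U}$ on variables $X=\{X_i\}_{i\in[p]}$, whose causal skeleton matrices $M_u\in\{0,1\}^{p\times p}$ satisfy $M_u\neq M_{u'}$ for all $u\neq u'$. Assume the Mixed Data Structure Learning assumption stated in the context. Let $\hat C:\mathcal{X}\to\hat U$, with $|\hat U|=|U|$, be the learned mapping. Then $\hat C$ is swap-label equivalent to $C$, i.e. there is a bijection $g:U\to\hat U$ with $\hat C(x)=g(C(x))$ for all $x\in\mathcal{X}$.
   Context: A Meta-Causal Graph consists of a finite set $U$ of meta states, for each $u\in U$ a DAG $\mathcal{G}_u$ on vertex set $[p]=\{1,\dots,p\}$ with causal skeleton matrix $M_u$ ($M_u[i,j]=1$ iff $i$ is a parent of $j$ in $\mathcal{G}_u$), and a ground-truth mapping $C:\mathcal{X}\to U$ assigning each state $x$ its active meta state; the skeleton matrices of distinct meta states are distinct. Each sample $x$ is generated from the causal subgraph $\mathcal{G}_{C(x)}$. Mixed Data Structure Learning assumption: for any dataset $\mathcal{D}$ whose samples are generated from the subgraphs indexed by a set $S_{\mathcal{D}}\subseteq U$, learning a single causal graph $\hat{\mathcal{G}}$ from $\mathcal{D}$ (treating all samples as coming from one graph) yields $\mathrm{Pa}_{\hat{\mathcal{G}}}(X_j)=\bigcup_{u\in S_{\mathcal{D}}}\mathrm{Pa}_{\mathcal{G}_u}(X_j)$ for all $j\in[p]$; equivalently the learned skeleton is the entrywise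 OR of the $M_u$, $u\in S_{\mathcal D}$. Learned mapping: for a candidate mapping $\hat C:\mathcal{X}\to\hat U$, for each $\hat u\in\hat U$ a skeleton matrix $\hat M_{\hat u}$ is learned from the pooled samples $\{x:\hat C(x)=\hat u\}$ (so by the assumption $\hat M_{\hat u}[i,j]=\max_{x:\hat C(x)=\hat u}M_{C(x)}[i,j]$), and the learned mapping is one selected by the learning procedure as minimizing the expected structural complexity $\mathbb{E}_{x}\big[\|\hat M_{\hat C(x)}\|_1\big]$ (number of edges) over such mappings. Two mappings $C_1:\mathcal{X}\to U_1$, $C_2:\mathcal{X}\to U_2$ are swap-label equivalent if there is a permutation (bijection) $g:U_1\to U_2$ with $C_2(x)=g(C_1(x))$ for all $x\in\mathcal{X}$. *)

theory Defs
  imports "HOL-Probability.Probability"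
begin

text \<open>A causal skeleton matrix on vertex set [p] = {1..p} is a 0/1 matrix, represented as a
  predicate A with A i j = True iff i is a parent of j.\<close>
definition dag_skeleton :: "nat \<Rightarrow> (nat \<Rightarrow> nat \<Rightarrow> bool) \<Rightarrow> bool" where
  "dag_skeleton p A \<longleftrightarrow>
     (\<forall>i j. A i j \<longrightarrow> i \<in> {1..p} \<and> j \<in> {1..p}) \<and> acyclic {(i, j). A i j}"

text \<open>Number of edges, i.e. the entrywise 1-norm of the skeleton matrix.\<close>
definition n_edges :: "nat \<Rightarrow> (nat \<Rightarrow> nat \<Rightarrow> bool) \<Rightarrow> nat" where
  "n_edges p A = card {(i, j). i \<in> {1..p} \<and> j \<in> {1..p} \<and> A i j}"

text \<open>Skeleton learned (under the Mixed Data Structure Learning assumption) from the pooled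
  samples assigned to candidate meta state v by the candidate mapping Ch: entrywise OR (max)
  of the true skeletons M (C x) over all states x with Ch x = v.\<close>
definition learned_skeleton ::
  "('u \<Rightarrow> nat \<Rightarrow> nat \<Rightarrow> bool) \<Rightarrow> ('x \<Rightarrow> 'u) \<Rightarrow> ('x \<Rightarrow> 'v) \<Rightarrow> 'v \<Rightarrow> nat \<Rightarrow> nat \<Rightarrow> bool" where
  "learned_skeleton M C Ch v i j \<longleftrightarrow> (\<exists>x. Ch x = v \<and> M (C x) i j)"

definition struct_complexity ::
  "nat \<Rightarrow> 'x pmf \<Rightarrow> ('u \<Rightarrow> nat \<Rightarrow> nat \<Rightarrow> bool) \<Rightarrow> ('x \<Rightarrow> 'u) \<Rightarrow> ('x \<Rightarrow> 'v) \<Rightarrow> real" where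
  "struct_complexity p D M C Ch =
     measure_pmf.expectation D (\<lambda>x. real (n_edges p (learned_skeleton M C Ch (Ch x))))"

end

theory Submission
  imports Defs
begin

text \<open>Whatever the candidate mapping, the skeleton learned for the block containing x is the OR
  of skeletons including M (C x), so its edge count is at least that of M (C x). Relabelling C
  by any bijection U \<rightarrow> Uh attains this bound pointwise, so a minimiser must attain it
  almost surely, hence everywhere under full support. Then every block skeleton equals the
  true skeleton of each of its members; as distinct meta states have distinct skeletons, each
  block lies inside one meta state, i.e. C factors through Ch, and counting forces the factor
  map to be a bijection.\<close>

lemma finite_edge_set:
  fixes p :: nat
  shows "finite {(i, j). i \<in> {1..p} \<and> j \<in> {1..p} \<and> A i j}"
  by (rule finite_subset[of _ "{1..p} \<times> {1..p}"]) auto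

lemma n_edges_le_square: "n_edges p A \<le> p * p"
proof -
  have "n_edges p A \<le> card ({1..p} \<times> {1..p})"
    unfolding n_edges_def by (rule card_mono) auto
  then show ?thesis by simp
qed

lemma n_edges_mono:
  assumes "A \<le> B"
  shows "n_edges p A \<le> n_edges p B"
  unfolding n_edges_def using assms
  by (intro card_mono[OF finite_edge_set]) (auto simp: le_fun_def)

lemma n_edges_le_imp_eq:
  assumes "A \<le> B"
    and "\<forall>i j. B i j \<longrightarrow> i \<in> {1..p} \<and> j \<in> {1..p}"
    and "n_edges p B \<le> n_edges p A"
  shows "B = A"
proof -
  have "{(i, j). i \<in> {1..p} \<and> j \<in> {1..p} \<and> A i j} \<subseteq> {(i, j). i \<in> {1..p} \<and> j \<in> {1..p} \<and> B i j}"
    using assms(1) by (auto simp: le_fun_def)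
  moreover have "n_edges p A = n_edges p B"
    using n_edges_mono[OF assms(1), of p] assms(3) by simp
  ultimately have "{(i, j). i \<in> {1..p} \<and> j \<in> {1..p} \<and> A i j} = {(i, j). i \<in> {1..p} \<and> j \<in> {1..p} \<and> B i j}"
    unfolding n_edges_def by (intro card_subset_eq[OF finite_edge_set])
  then show ?thesis
    using assms(1,2) by (fastforce simp: le_fun_def fun_eq_iff)
qed

lemma integrable_n_edges: "integrable (measure_pmf D) (\<lambda>x. real (n_edges p (A x)))"
  by (rule measure_pmf.integrable_const_bound[where B = "real (p * p)"])
    (use n_edges_le_square in \<open>auto simp del: of_nat_mult intro!: AE_I2\<close>)

lemma expectation_le_imp_eq_on_set_pmf:
  fixes f g :: "'a \<Rightarrow> real"
  assumes "integrable (measure_pmf D) f" "integrable (measure_pmf D) g"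
    and "\<forall>x\<in>set_pmf D. f x \<le> g x"
    and "measure_pmf.expectation D g \<le> measure_pmf.expectation D f"
    and "x \<in> set_pmf D"
  shows "f x = g x"
proof -
  have "measure_pmf.expectation D f \<le> measure_pmf.expectation D g"
    using assms(1-3) by (intro integral_mono_AE) (auto simp: AE_measure_pmf_iff)
  then have "measure_pmf.expectation D (\<lambda>x. g x - f x) = 0"
    using assms(1,2,4) by simp
  then have "AE x in measure_pmf D. g x - f x = 0"
    using assms(1-3)
    by (subst (asm) measure_pmf.integral_nonneg_eq_0_iff_AE_banach) (auto simp: AE_measure_pmf_iff)
  then show ?thesis
    using assms(5) by (auto simp: AE_measure_pmf_iff)
qed

lemma true_skeleton_le_learned_skeleton: "M (C x) \<le> learned_skeleton M C Ch (Ch x)"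
  unfolding learned_skeleton_def le_fun_def by auto

lemma learned_skeleton_relabel:
  assumes "inj_on g (range C)"
  shows "learned_skeleton M C (g \<circ> C) (g (C x)) = M (C x)"
  using assms by (auto simp: learned_skeleton_def fun_eq_iff dest: inj_onD)

lemma struct_complexity_relabel:
  assumes "inj_on g (range C)"
  shows "struct_complexity p D M C (g \<circ> C) = measure_pmf.expectation D (\<lambda>x. real (n_edges p (M (C x))))"
  unfolding struct_complexity_def using learned_skeleton_relabel[OF assms] by simp

lemma learned_skeleton_eq_if_minimal:
  assumes supp: "\<forall>y i j. M (C y) i j \<longrightarrow> i \<in> {1..p} \<and> j \<in> {1..p}"
    and "set_pmf D = UNIV"
    and "struct_complexity p D M C Ch \<le> measure_pmf.expectation D (\<lambda>x. real (n_edges p (M (C x))))"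
  shows "learned_skeleton M C Ch (Ch x) = M (C x)"
proof (rule n_edges_le_imp_eq[OF true_skeleton_le_learned_skeleton])
  show "\<forall>i j. learned_skeleton M C Ch (Ch x) i j \<longrightarrow> i \<in> {1..p} \<and> j \<in> {1..p}"
    using supp by (auto simp: learned_skeleton_def)
  have "real (n_edges p (M (C x))) = real (n_edges p (learned_skeleton M C Ch (Ch x)))"
    using assms(2,3) unfolding struct_complexity_def
    by (intro expectation_le_imp_eq_on_set_pmf[where D = D, OF integrable_n_edges integrable_n_edges])
      (simp_all add: n_edges_mono[OF true_skeleton_le_learned_skeleton])
  then show "n_edges p (learned_skeleton M C Ch (Ch x)) \<le> n_edges p (M (C x))"
    by simp
qed

lemma swap_label_if_factors:
  assumes "finite Uh" "card Uh = card U" "range C = U" "range Ch \<subseteq> Uh"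
    and factors: "\<And>x y. Ch x = Ch y \<Longrightarrow> C x = C y"
  shows "\<exists>g. bij_betw g U Uh \<and> (\<forall>x. Ch x = g (C x))"
proof -
  define f where "f v = C (SOME x. Ch x = v)" for v
  have f_Ch: "f (Ch x) = C x" for x
    unfolding f_def by (rule factors) (rule someI, rule refl)
  have image_f: "f ` range Ch = U"
    using assms(3) f_Ch by (auto simp: image_iff)
  have finite_range: "finite (range Ch)"
    using assms(1,4) finite_subset by blast
  have "card U \<le> card (range Ch)"
    using image_f card_image_le[OF finite_range, of f] by simp
  moreover have "card (range Ch) \<le> card Uh"
    using card_mono[OF assms(1,4)] .
  ultimately have "card (range Ch) = card Uh" "card (f ` range Ch) = card (range Ch)"
    using assms(2) image_f by simp_all
  then have "range Ch = Uh" "inj_on f (range Ch)"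
    using card_subset_eq[OF assms(1,4)] eq_card_imp_inj_on[OF finite_range] by simp_all
  then have "bij_betw f Uh U"
    using image_f by (simp add: bij_betw_def)
  moreover have "Ch x = inv_into Uh f (C x)" for x
    using \<open>inj_on f (range Ch)\<close> \<open>range Ch = Uh\<close>
    by (metis f_Ch inv_into_f_f rangeI)
  ultimately show ?thesis
    using bij_betw_inv_into by blast
qed

theorem theorem1:
  fixes p :: nat
    and D :: "'x pmf"
    and U :: "'u set"
    and M :: "'u \<Rightarrow> nat \<Rightarrow> nat \<Rightarrow> bool"
    and C :: "'x \<Rightarrow> 'u"
    and Uh :: "'v set"
    and Ch :: "'x \<Rightarrow> 'v"
  assumes "finite U"
    and "\<forall>u\<in>U. dag_skeleton p (M u)"
    and "inj_on M U"
    and "range C = U"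
    and "set_pmf D = UNIV"
    and "finite Uh"
    and "card Uh = card U"
    and "range Ch \<subseteq> Uh"
    and "\<forall>C'. range C' \<subseteq> Uh \<longrightarrow> struct_complexity p D M C Ch \<le> struct_complexity p D M C C'"
  shows "\<exists>g. bij_betw g U Uh \<and> (\<forall>x. Ch x = g (C x))"
proof -
  obtain g0 where g0: "bij_betw g0 U Uh"
    using finite_same_card_bij assms(1,6,7) by metis
  have "range (g0 \<circ> C) = Uh"
    using assms(4) g0 by (metis bij_betw_imp_surj_on image_comp)
  then have "struct_complexity p D M C Ch \<le> struct_complexity p D M C (g0 \<circ> C)"
    using assms(9) by simp
  also have "\<dots> = measure_pmf.expectation D (\<lambda>x. real (n_edges p (M (C x))))"
    using assms(4) g0 by (intro struct_complexity_relabel) (simp add: bij_betw_def)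
  finally have learned_eq: "learned_skeleton M C Ch (Ch x) = M (C x)" for x
    using assms(2,4,5) unfolding dag_skeleton_def
    by (intro learned_skeleton_eq_if_minimal) blast+
  have "C x = C y" if "Ch x = Ch y" for x y
    using learned_eq[of x] learned_eq[of y] that assms(3,4) by (metis inj_on_def rangeI)
  then show ?thesis
    using swap_label_if_factors assms(4,6,7,8) by blast
qed

end
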